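(* Let $p\geq 3$ be odd and consider a chiral conformal field theory with Virasoro symmetry at central charge $c_{2,p}=1-3(p-2)^2/p$ whose vacuum is invariant under $L_{-1},L_0,L_1$. Suppose it contains two fields $\lambda_1,\lambda_2$ (the logarithmic partner fields of two rank-2 staggered modules sharing the highest weight submodule $\mathcal{I}_{1,p-1}$), both of conformal weight $1$, with operator product expansions $$T(z_1)\lambda_i(z_2) = \frac{\beta_i\,\phi(z_2)}{z_{12}^3} + \frac{\lambda_i(z_2)+\chi(z_2)}{z_{12}^2} + \frac{\partial\lambda_i(z_2)}{z_{12}} + \ldots,\qquad i=1,2,$$ where $\phi=\phi_{1,p-1}$ is the primary field of dimension $0$ with $\langle\phi(z_1)\phi(z_2)\rangle=1$ and $\chi=\partial\phi$. Then the two-point function $\langle\lambda_1(z_1)\lambda_2(z_2)\rangle$ can satisfy the Ward identities of global conformal invariance (under $L_{-1},L_0,L_1$) only if $\beta_1=\beta_2$. In particular, since the staggered modules $\mathcal{S}_{1,p+1}$ and $\mathcal{S}_{3,p-1}$ have logarithmic couplings $\beta_{1,p+1}=-\frac{p-2}{2}$ and $\beta_{3,p-1}=\frac{p-2}{p}$, which differ, these two staggered modules cannot both be present in the spectrum of such a theory.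
   Context: For $c=c_{2,p}$ and positive integers $r,s$, set $h_{r,s}=\frac{(pr-2s)^2-(p-2)^2}{8p}$; then $h_{1,p-1}=0$ and $h_{1,p+1}=h_{3,p-1}=1$. Let $\mathcal{I}_{r,s}$ denote the quotient of the Verma module of highest weight $h_{r,s}$ (highest weight state $|\phi_{r,s}\rangle$) by the Verma submodule generated by its singular vector at grade $rs$. In $\mathcal{I}_{1,p-1}$, $|\chi_{1,p-1}\rangle=L_{-1}|\phi_{1,p-1}\rangle$ is a non-vanishing singular vector of dimension $1$. A rank-2 staggered module $\mathcal{S}_{r,s}$ (here $(r,s)=(1,p+1)$ or $(3,p-1)$) is an indecomposable Virasoro module with highest weight submodule isomorphic to $\mathcal{I}_{1,p-1}$ and quotient by this submodule isomorphic to $\mathcal{I}_{r,s}$, generated by $|\phi_{1,p-1}\rangle$ and a state $|\lambda_{r,s}\rangle$ with $L_0|\lambda_{r,s}\rangle=|\lambda_{r,s}\rangle+|\chi_{1,p-1}\rangle$; its logarithmic coupling is $\beta_{r,s}=\langle\chi_{1,p-1}|\lambda_{r,s}\rangle$, with $L_1|\lambda_{r,s}\rangle=\beta_{r,s}|\phi_{1,p-1}\rangle$, for the inner product with $L_n^\dagger=L_{-n}$ normalised so that $\langle\phi_{1,p-1}|\phi_{1,p-1}\rangle=1$. Global conformal invariance means correlators are annihilated by the differential operators induced (via the OPEs with $T$) by $L_{-1}$, $L_0$ and $L_1$. The notation is $z_{12}=z_1-z_2$. *)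

theory Defs
  imports "HOL-Analysis.Analysis"
begin

datatype fld = Phi | Chi | Lam1 | Lam2

text \<open>Action of the modes L_0 (j = 0) and L_1 (j = 1) on the fields, as read off from
  the OPEs with T, written as finite linear combinations (coefficient, field).
  L_0 phi = 0, L_1 phi = 0 (primary of weight 0); chi = L_{-1} phi, so L_0 chi = chi
  and L_1 chi = 2 L_0 phi = 0; L_0 lambda_i = lambda_i + chi, L_1 lambda_i = beta_i phi.\<close>
fun Lact :: "complex \<Rightarrow> complex \<Rightarrow> nat \<Rightarrow> fld \<Rightarrow> (complex \<times> fld) list" where
  "Lact b1 b2 0 Phi = []"
| "Lact b1 b2 0 Chi = [(1, Chi)]"
| "Lact b1 b2 0 Lam1 = [(1, Lam1), (1, Chi)]"
| "Lact b1 b2 0 Lam2 = [(1, Lam2), (1, Chi)]"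
| "Lact b1 b2 (Suc 0) Phi = []"
| "Lact b1 b2 (Suc 0) Chi = []"
| "Lact b1 b2 (Suc 0) Lam1 = [(b1, Phi)]"
| "Lact b1 b2 (Suc 0) Lam2 = [(b2, Phi)]"
| "Lact b1 b2 (Suc (Suc j)) f = []"

text \<open>Partial derivatives of a two-point function C a b z1 z2 = <a(z1) b(z2)>.\<close>
definition dz1 :: "(fld \<Rightarrow> fld \<Rightarrow> complex \<Rightarrow> complex \<Rightarrow> complex) \<Rightarrow> fld \<Rightarrow> fld \<Rightarrow> complex \<Rightarrow> complex \<Rightarrow> complex" where
  "dz1 C a b z1 z2 = deriv (\<lambda>w. C a b w z2) z1"

definition dz2 :: "(fld \<Rightarrow> fld \<Rightarrow> complex \<Rightarrow> complex \<Rightarrow> complex) \<Rightarrow> fld \<Rightarrow> fld \<Rightarrow> complex \<Rightarrow> complex \<Rightarrow> complex" where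
  "dz2 C a b z1 z2 = deriv (\<lambda>w. C a b z1 w) z2"

definition act_left :: "(nat \<Rightarrow> fld \<Rightarrow> (complex \<times> fld) list) \<Rightarrow> (fld \<Rightarrow> fld \<Rightarrow> complex \<Rightarrow> complex \<Rightarrow> complex) \<Rightarrow> nat \<Rightarrow> fld \<Rightarrow> fld \<Rightarrow> complex \<Rightarrow> complex \<Rightarrow> complex" where
  "act_left L C j a b z1 z2 = sum_list (map (\<lambda>(c, f). c * C f b z1 z2) (L j a))"

definition act_right :: "(nat \<Rightarrow> fld \<Rightarrow> (complex \<times> fld) list) \<Rightarrow> (fld \<Rightarrow> fld \<Rightarrow> complex \<Rightarrow> complex \<Rightarrow> complex) \<Rightarrow> nat \<Rightarrow> fld \<Rightarrow> fld \<Rightarrow> complex \<Rightarrow> complex \<Rightarrow> complex" where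
  "act_right L C j a b z1 z2 = sum_list (map (\<lambda>(c, f). c * C a f z1 z2) (L j b))"

text \<open>Global Ward identity for L_{N-1}, N = 0,1,2 (i.e. L_{-1}, L_0, L_1):
  sum_i [ z_i^N d_i + sum_{j<N} binom(N, j+1) z_i^(N-1-j) (L_j acting on field i) ] <a b> = 0.\<close>
definition global_ward :: "(nat \<Rightarrow> fld \<Rightarrow> (complex \<times> fld) list) \<Rightarrow> (fld \<Rightarrow> fld \<Rightarrow> complex \<Rightarrow> complex \<Rightarrow> complex) \<Rightarrow> fld \<Rightarrow> fld \<Rightarrow> complex \<Rightarrow> complex \<Rightarrow> bool" where
  "global_ward L C a b z1 z2 \<longleftrightarrow>
     (\<forall>N \<in> {0, 1, 2::nat}.
        z1 ^ N * dz1 C a b z1 z2 + z2 ^ N * dz2 C a b z1 z2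
        + (\<Sum>j<N. of_nat (N choose (j + 1)) *
              (z1 ^ (N - 1 - j) * act_left L C j a b z1 z2
               + z2 ^ (N - 1 - j) * act_right L C j a b z1 z2)) = 0)"

definition beta_1_pplus1 :: "nat \<Rightarrow> complex" where
  "beta_1_pplus1 p = - (of_nat p - 2) / 2"

definition beta_3_pminus1 :: "nat \<Rightarrow> complex" where
  "beta_3_pminus1 p = (of_nat p - 2) / of_nat p"

end

theory Submission
  imports Defs
begin

text \<open>The Ward identities for \<open>\<langle>\<phi> \<lambda>\<^sub>2\<rangle>\<close> and \<open>\<langle>\<lambda>\<^sub>1 \<phi>\<rangle>\<close> fix these correlators up to the
  couplings: \<open>z\<^sub>1\<^sub>2 \<langle>\<phi> \<lambda>\<^sub>2\<rangle> = \<beta>\<^sub>2\<close> and \<open>z\<^sub>1\<^sub>2 \<langle>\<lambda>\<^sub>1 \<phi>\<rangle> = -\<beta>\<^sub>1\<close>. Combining the \<open>L\<^sub>0\<close> and \<open>L\<^sub>1\<close>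
  identities for \<open>\<langle>\<lambda>\<^sub>1 \<lambda>\<^sub>2\<rangle>\<close> eliminates this correlator and its derivatives and leaves a
  relation between the two mixed correlators which, after inserting their explicit form,
  reads \<open>\<beta>\<^sub>1 - \<beta>\<^sub>2 = 0\<close>. The two quoted couplings differ for every \<open>p \<noteq> 2\<close>.\<close>

lemma global_ward_D:
  assumes "global_ward L C a b z1 z2"
  shows "dz1 C a b z1 z2 + dz2 C a b z1 z2 = 0"
    and "z1 * dz1 C a b z1 z2 + z2 * dz2 C a b z1 z2
           + (act_left L C 0 a b z1 z2 + act_right L C 0 a b z1 z2) = 0"
    and "z1\<^sup>2 * dz1 C a b z1 z2 + z2\<^sup>2 * dz2 C a b z1 z2
           + 2 * (z1 * act_left L C 0 a b z1 z2 + z2 * act_right L C 0 a b z1 z2)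
           + (act_left L C 1 a b z1 z2 + act_right L C 1 a b z1 z2) = 0"
proof -
  have ward: "z1 ^ N * dz1 C a b z1 z2 + z2 ^ N * dz2 C a b z1 z2
      + (\<Sum>j<N. of_nat (N choose (j + 1)) *
           (z1 ^ (N - 1 - j) * act_left L C j a b z1 z2
            + z2 ^ (N - 1 - j) * act_right L C j a b z1 z2)) = 0"
    if "N \<in> {0, 1, 2}" for N
    using assms that unfolding global_ward_def by blast
  show "dz1 C a b z1 z2 + dz2 C a b z1 z2 = 0"
    using ward[of 0] by simp
  show "z1 * dz1 C a b z1 z2 + z2 * dz2 C a b z1 z2
          + (act_left L C 0 a b z1 z2 + act_right L C 0 a b z1 z2) = 0"
    using ward[of 1] by simp
  show "z1\<^sup>2 * dz1 C a b z1 z2 + z2\<^sup>2 * dz2 C a b z1 z2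
          + 2 * (z1 * act_left L C 0 a b z1 z2 + z2 * act_right L C 0 a b z1 z2)
          + (act_left L C 1 a b z1 z2 + act_right L C 1 a b z1 z2) = 0"
    using ward[of 2] by (simp add: numeral_2_eq_2 algebra_simps)
qed

lemma deriv_eventually_const:
  fixes f :: "'a::real_normed_field \<Rightarrow> 'a"
  assumes "eventually (\<lambda>w. f w = c) (nhds z)"
  shows "deriv f z = 0"
proof -
  have "(f has_field_derivative 0) (at z) \<longleftrightarrow> ((\<lambda>w. c) has_field_derivative 0) (at z)"
    using assms by (intro DERIV_cong_ev) auto
  then show ?thesis
    by (intro DERIV_imp_deriv) simp
qed

lemma eventually_nhds_Pair_fst:
  assumes "open U" and "(x, y) \<in> U"
  shows "eventually (\<lambda>w. (w, y) \<in> U) (nhds x)"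
proof -
  have "((\<lambda>w. (w, y)) \<longlongrightarrow> (x, y)) (nhds x)"
    by (intro tendsto_intros) (simp add: filterlim_ident)
  then show ?thesis
    using assms topological_tendstoD by blast
qed

lemma eventually_nhds_Pair_snd:
  assumes "open U" and "(x, y) \<in> U"
  shows "eventually (\<lambda>w. (x, w) \<in> U) (nhds y)"
proof -
  have "((\<lambda>w. (x, w)) \<longlongrightarrow> (x, y)) (nhds y)"
    by (intro tendsto_intros) (simp add: filterlim_ident)
  then show ?thesis
    using assms topological_tendstoD by blast
qed

lemma ward_Phi_Lam2:
  assumes "global_ward (Lact \<beta>1 \<beta>2) C Phi Lam2 z1 z2"
    and "C Phi Phi z1 z2 = 1" and "dz2 C Phi Phi z1 z2 = 0"
    and "C Phi Chi z1 z2 = dz2 C Phi Phi z1 z2"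
  shows "(z1 - z2) * C Phi Lam2 z1 z2 = \<beta>2"
    and "(z1 - z2)\<^sup>2 * dz1 C Phi Lam2 z1 z2 = - \<beta>2"
proof -
  note ward = global_ward_D[OF assms(1), unfolded act_left_def act_right_def]
  have translation: "dz1 C Phi Lam2 z1 z2 + dz2 C Phi Lam2 z1 z2 = 0"
    using ward(1) .
  have dilation: "z1 * dz1 C Phi Lam2 z1 z2 + z2 * dz2 C Phi Lam2 z1 z2 + C Phi Lam2 z1 z2 = 0"
    using ward(2) assms(2-4) by (simp add: algebra_simps)
  have special: "z1\<^sup>2 * dz1 C Phi Lam2 z1 z2 + z2\<^sup>2 * dz2 C Phi Lam2 z1 z2
      + 2 * z2 * C Phi Lam2 z1 z2 + \<beta>2 = 0"
    using ward(3) assms(2-4) by (simp add: algebra_simps)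
  show value_eq: "(z1 - z2) * C Phi Lam2 z1 z2 = \<beta>2"
    using translation dilation special by algebra
  show "(z1 - z2)\<^sup>2 * dz1 C Phi Lam2 z1 z2 = - \<beta>2"
    using translation dilation value_eq by algebra
qed

lemma ward_Lam1_Phi:
  assumes "global_ward (Lact \<beta>1 \<beta>2) C Lam1 Phi z1 z2"
    and "C Phi Phi z1 z2 = 1" and "dz1 C Phi Phi z1 z2 = 0"
    and "C Chi Phi z1 z2 = dz1 C Phi Phi z1 z2"
  shows "(z1 - z2) * C Lam1 Phi z1 z2 = - \<beta>1"
    and "(z1 - z2)\<^sup>2 * dz2 C Lam1 Phi z1 z2 = - \<beta>1"
proof -
  note ward = global_ward_D[OF assms(1), unfolded act_left_def act_right_def]
  have translation: "dz1 C Lam1 Phi z1 z2 + dz2 C Lam1 Phi z1 z2 = 0"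
    using ward(1) .
  have dilation: "z1 * dz1 C Lam1 Phi z1 z2 + z2 * dz2 C Lam1 Phi z1 z2 + C Lam1 Phi z1 z2 = 0"
    using ward(2) assms(2-4) by (simp add: algebra_simps)
  have special: "z1\<^sup>2 * dz1 C Lam1 Phi z1 z2 + z2\<^sup>2 * dz2 C Lam1 Phi z1 z2
      + 2 * z1 * C Lam1 Phi z1 z2 + \<beta>1 = 0"
    using ward(3) assms(2-4) by (simp add: algebra_simps)
  show value_eq: "(z1 - z2) * C Lam1 Phi z1 z2 = - \<beta>1"
    using translation dilation special by algebra
  show "(z1 - z2)\<^sup>2 * dz2 C Lam1 Phi z1 z2 = - \<beta>1"
    using translation dilation value_eq by algebra
qed

lemma ward_Lam1_Lam2:
  assumes "global_ward (Lact \<beta>1 \<beta>2) C Lam1 Lam2 z1 z2"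
    and "C Chi Lam2 z1 z2 = dz1 C Phi Lam2 z1 z2"
    and "C Lam1 Chi z1 z2 = dz2 C Lam1 Phi z1 z2"
  shows "(z1 - z2) * (dz1 C Phi Lam2 z1 z2 - dz2 C Lam1 Phi z1 z2)
           + \<beta>1 * C Phi Lam2 z1 z2 + \<beta>2 * C Lam1 Phi z1 z2 = 0"
proof -
  note ward = global_ward_D[OF assms(1), unfolded act_left_def act_right_def]
  have "z1 * dz1 C Lam1 Lam2 z1 z2 + z2 * dz2 C Lam1 Lam2 z1 z2
      + (2 * C Lam1 Lam2 z1 z2 + dz1 C Phi Lam2 z1 z2 + dz2 C Lam1 Phi z1 z2) = 0"
    using ward(2) assms(2,3) by (simp add: algebra_simps)
  moreover have "z1\<^sup>2 * dz1 C Lam1 Lam2 z1 z2 + z2\<^sup>2 * dz2 C Lam1 Lam2 z1 z2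
      + 2 * (z1 * (C Lam1 Lam2 z1 z2 + dz1 C Phi Lam2 z1 z2)
             + z2 * (C Lam1 Lam2 z1 z2 + dz2 C Lam1 Phi z1 z2))
      + (\<beta>1 * C Phi Lam2 z1 z2 + \<beta>2 * C Lam1 Phi z1 z2) = 0"
    using ward(3) assms(2,3) by (simp add: algebra_simps)
  ultimately show ?thesis
    using ward(1) by algebra
qed

lemma logarithmic_couplings_eq:
  assumes ward: "\<And>a b. global_ward (Lact \<beta>1 \<beta>2) C a b z1 z2"
    and "C Phi Phi z1 z2 = 1" and "dz1 C Phi Phi z1 z2 = 0" and "dz2 C Phi Phi z1 z2 = 0"
    and chi1: "\<And>b. C Chi b z1 z2 = dz1 C Phi b z1 z2"
    and chi2: "\<And>a. C a Chi z1 z2 = dz2 C a Phi z1 z2"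
  shows "\<beta>1 = \<beta>2"
proof -
  define z where "z = z1 - z2"
  note left = ward_Phi_Lam2[OF ward assms(2,4) chi2, folded z_def]
  note right = ward_Lam1_Phi[OF ward assms(2,3) chi1, folded z_def]
  have "\<beta>1 - \<beta>2 = z\<^sup>2 * dz1 C Phi Lam2 z1 z2 - z\<^sup>2 * dz2 C Lam1 Phi z1 z2
      + \<beta>1 * (z * C Phi Lam2 z1 z2) + \<beta>2 * (z * C Lam1 Phi z1 z2)"
    by (simp add: left right algebra_simps)
  also have "\<dots> = z * (z * (dz1 C Phi Lam2 z1 z2 - dz2 C Lam1 Phi z1 z2)
      + \<beta>1 * C Phi Lam2 z1 z2 + \<beta>2 * C Lam1 Phi z1 z2)"
    by (simp add: algebra_simps power2_eq_square)
  also have "\<dots> = 0"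
    using ward_Lam1_Lam2[OF ward chi1 chi2] by (simp add: z_def)
  finally show ?thesis
    by simp
qed

lemma beta_1_pplus1_neq_beta_3_pminus1:
  assumes "p \<noteq> 2"
  shows "beta_1_pplus1 p \<noteq> beta_3_pminus1 p"
proof
  assume eq: "beta_1_pplus1 p = beta_3_pminus1 p"
  show False
  proof (cases "p = 0")
    case True
    with eq show False
      by (simp add: beta_1_pplus1_def beta_3_pminus1_def)
  next
    case False
    then have "- (of_nat p - 2) * of_nat p = 2 * (of_nat p - (2::complex))"
      using eq by (simp add: beta_1_pplus1_def beta_3_pminus1_def field_simps)
    then have "of_nat (p * p) = (of_nat 4 :: complex)"
      by (simp add: algebra_simps)
    then have "p * p = 2 * 2"
      by (simp only: of_nat_eq_iff)
    then have "p = 2"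
      using power2_eq_square power2_eq_imp_eq by (metis zero_le)
    with assms show False ..
  qed
qed

theorem mainTheorem3:
  fixes p :: nat and \<beta>1 \<beta>2 :: complex
    and C :: "fld \<Rightarrow> fld \<Rightarrow> complex \<Rightarrow> complex \<Rightarrow> complex"
    and U :: "(complex \<times> complex) set"
  assumes "odd p" and "p \<ge> 3"
    and "open U" and "U \<noteq> {}" and "\<forall>(z1, z2) \<in> U. z1 \<noteq> z2"
    and "\<forall>(z1, z2) \<in> U. \<forall>a b.
           (\<lambda>w. C a b w z2) field_differentiable at z1 \<and>
           (\<lambda>w. C a b z1 w) field_differentiable at z2"
    and "\<forall>(z1, z2) \<in> U. C Phi Phi z1 z2 = 1"
    and "\<forall>(z1, z2) \<in> U. \<forall>b. C Chi b z1 z2 = dz1 C Phi b z1 z2"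
    and "\<forall>(z1, z2) \<in> U. \<forall>a. C a Chi z1 z2 = dz2 C a Phi z1 z2"
    and "\<forall>(z1, z2) \<in> U. \<forall>a b. global_ward (Lact \<beta>1 \<beta>2) C a b z1 z2"
  shows "\<beta>1 = \<beta>2 \<and> \<not> (\<beta>1 = beta_1_pplus1 p \<and> \<beta>2 = beta_3_pminus1 p)"
proof -
  obtain z1 z2 where z: "(z1, z2) \<in> U"
    using assms(4) by auto
  have "dz1 C Phi Phi z1 z2 = 0"
    unfolding dz1_def using eventually_nhds_Pair_fst[OF assms(3) z] assms(7)
    by (intro deriv_eventually_const) (auto elim: eventually_mono)
  moreover have "dz2 C Phi Phi z1 z2 = 0"
    unfolding dz2_def using eventually_nhds_Pair_snd[OF assms(3) z] assms(7)
    by (intro deriv_eventually_const) (auto elim: eventually_mono)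
  ultimately have "\<beta>1 = \<beta>2"
    using z assms(7-10) by (intro logarithmic_couplings_eq[of \<beta>1 \<beta>2 C z1 z2]) auto
  moreover have "beta_1_pplus1 p \<noteq> beta_3_pminus1 p"
    using assms(2) by (intro beta_1_pplus1_neq_beta_3_pminus1) simp
  ultimately show ?thesis
    by auto
qed

end
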